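(* Let $G$ be the digraph with $V(G)=\{u,v,w\}$ and $E(G)=\{(u,v),(u,w),(w,w)\}$. Then the associative spectrum of $\mathbb{A}(G)$ satisfies $s_n=|R_{n-1}|$ for all $n\ge3$. Hence $s_n=\Theta(\alpha^n)$, where $\alpha\approx1.755$ is the unique positive root of $x^4-x^3-x^2-1$.
   Context: The graph algebra $\mathbb{A}(G)$ is the groupoid on $V\cup\{\infty\}$ with $xy=x$ if $x,y\in V$ and $(x,y)\in E$, and $xy=\infty$ otherwise. $B_n$ is the set of binary terms in which $x_1,\dots,x_n$ each occur once in this order; the associative spectrum $s_n$ is the number of distinct term operations on $\mathbb{A}(G)$ induced by bracketings in $B_n$. For $n\ge2$, $R_n$ is the set of words of length $n$ over $\{0,1\}$ that do not start with $01$, do not end with $10$, and do not contain $101$. $\Theta(\alpha^n)$ means bounded between $c_1\alpha^n$ and $c_2\alpha^n$ for positive constants $c_1,c_2$. *)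

theory Defs
  imports Main "HOL-Library.FuncSet" "HOL-Library.Sublist" "HOL-Library.Landau_Symbols"
begin

(* Graph algebra A(G) of a digraph with vertex set V and edge set E:
   carrier is Some ` V \<union> {None}, where None plays the role of \<infinity>. *)
fun graph_op :: "('a \<times> 'a) set \<Rightarrow> 'a option \<Rightarrow> 'a option \<Rightarrow> 'a option" where
  "graph_op E (Some x) (Some y) = (if (x, y) \<in> E then Some x else None)"
| "graph_op E _ _ = None"

definition graph_carrier :: "'a set \<Rightarrow> 'a option set" where
  "graph_carrier V = Some ` V \<union> {None}"

(* Bracketings: binary trees whose leaves are the variables x_1..x_n in order *)
datatype btree = Leaf | Node btree btree

fun leaves :: "btree \<Rightarrow> nat" where
  "leaves Leaf = 1"
| "leaves (Node l r) = leaves l + leaves r"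

definition B :: "nat \<Rightarrow> btree set" where
  "B n = {t. leaves t = n}"

fun eval_term :: "('b \<Rightarrow> 'b \<Rightarrow> 'b) \<Rightarrow> btree \<Rightarrow> 'b list \<Rightarrow> 'b" where
  "eval_term f Leaf xs = hd xs"
| "eval_term f (Node l r) xs =
     f (eval_term f l (take (leaves l) xs)) (eval_term f r (drop (leaves l) xs))"

definition term_op :: "'b set \<Rightarrow> ('b \<Rightarrow> 'b \<Rightarrow> 'b) \<Rightarrow> nat \<Rightarrow> btree \<Rightarrow> ('b list \<Rightarrow> 'b)" where
  "term_op A f n t = restrict (eval_term f t) {xs. length xs = n \<and> set xs \<subseteq> A}"

definition assoc_spectrum :: "'b set \<Rightarrow> ('b \<Rightarrow> 'b \<Rightarrow> 'b) \<Rightarrow> nat \<Rightarrow> nat" where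
  "assoc_spectrum A f n = card (term_op A f n ` B n)"

datatype vert = U | Vv | W

definition G_edges :: "(vert \<times> vert) set" where
  "G_edges = {(U, Vv), (U, W), (W, W)}"

definition R :: "nat \<Rightarrow> nat list set" where
  "R n = {w. length w = n \<and> set w \<subseteq> {0, 1} \<and> \<not> prefix [0, 1] w \<and> \<not> suffix [1, 0] w
              \<and> \<not> sublist [1, 0, 1] w}"

end

theory Submission
  imports Defs
begin

(* In A(G) a product is its left factor or infinity; v is a sink and w carries only its loop.
   Hence a bracketing t with n >= 2 leaves maps a tuple not starting with u to w if all its
   entries are w and to infinity otherwise, and maps (u, y_2, ..., y_n) to u exactly when
   every y_i is w or, provided x_i is by itself the right factor of a product in t, v.
   So the term operation of t determines and is determined by the 0/1 word marking these
   variables. The words arising are the concatenations of blocks 1 and 0^k with k >= 2, which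
   are the words of R_(n-1). Sorting them by their last block yields
   r(m+4) = r(m+3) + r(m+2) + r(m), with characteristic polynomial x^4 - x^3 - x^2 - 1, and
   induction along the recurrence gives the Theta(alpha^n) bounds. *)

section \<open>Admissible words and block words\<close>

text \<open>The word \<open>[0]\<close> is excluded so that admissible words are exactly the block words;
  this changes only \<open>R 1\<close>.\<close>

definition admissible :: "nat list \<Rightarrow> bool" where
  "admissible w \<longleftrightarrow> set w \<subseteq> {0, 1} \<and> \<not> prefix [0, 1] w \<and> \<not> suffix [1, 0] w
                      \<and> \<not> sublist [1, 0, 1] w \<and> w \<noteq> [0]"

lemma R_eq_admissible: "2 \<le> m \<Longrightarrow> R m = {w. length w = m \<and> admissible w}"
  by (auto simp: R_def admissible_def)

lemma suffix_singleton_iff: "suffix [x] v \<longleftrightarrow> v \<noteq> [] \<and> last v = x"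
  by (cases v rule: rev_cases) auto

lemma suffix_pair_snoc_iff: "suffix [a, b] (v @ [x]) \<longleftrightarrow> b = x \<and> v \<noteq> [] \<and> last v = a"
  using snoc_suffix_snoc[of "[a]" b v x] by (simp add: suffix_singleton_iff)

lemma sublist_triple_snoc_iff:
  "sublist [a, b, c] (v @ [x]) \<longleftrightarrow> c = x \<and> suffix [a, b] v \<or> sublist [a, b, c] v"
  using snoc_suffix_snoc[of "[a, b]" c v x] by (simp add: sublist_snoc)

lemma last_of_suffix_pair: "suffix [a, b] v \<Longrightarrow> v \<noteq> [] \<and> last v = b"
  by (auto simp: suffix_def)

lemma last_binary: "set w \<subseteq> {0, 1} \<Longrightarrow> w \<noteq> [] \<Longrightarrow> last w = 0 \<or> last w = (1::nat)"
  using last_in_set[of w] by blast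

lemma admissible_snoc_one_iff: "admissible (v @ [1]) \<longleftrightarrow> admissible v"
  by (auto simp: admissible_def sublist_triple_snoc_iff suffix_pair_snoc_iff
      dest: last_of_suffix_pair)

lemma admissible_snoc_zero: "admissible v \<Longrightarrow> v \<noteq> [] \<Longrightarrow> last v = 0 \<Longrightarrow> admissible (v @ [0])"
  by (auto simp: admissible_def sublist_triple_snoc_iff suffix_pair_snoc_iff
      simp del: suffix_snoc dest: last_of_suffix_pair)

lemma admissible_append_zeros:
  "admissible v \<Longrightarrow> v \<noteq> [] \<Longrightarrow> last v = 0 \<Longrightarrow> admissible (v @ replicate k 0)"
proof (induction k)
  case (Suc k)
  have "v @ replicate (Suc k) 0 = (v @ replicate k 0) @ [0]"
    by (simp add: replicate_append_same)
  moreover have "last (v @ replicate k 0) = 0" using Suc.prems by (cases k) auto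
  ultimately show ?case using admissible_snoc_zero[OF Suc.IH] Suc.prems by simp
qed simp

lemma admissible_append_two_zeros:
  assumes "admissible v" "v = [] \<or> last v = 1"
  shows "admissible (v @ [0, 0])"
proof -
  have "admissible ((v @ [0]) @ [0])"
    using assms unfolding admissible_def sublist_triple_snoc_iff suffix_pair_snoc_iff prefix_snoc
    by (auto dest: last_of_suffix_pair)
  then show ?thesis by simp
qed

lemma admissible_appendD:
  assumes "admissible (v @ z)"
  shows "set v \<subseteq> {0, 1} \<and> \<not> prefix [0, 1] v \<and> \<not> sublist [1, 0, 1] v"
proof -
  have "prefix [0, 1] v \<Longrightarrow> prefix [0, 1] (v @ z)" by (rule prefix_prefix)
  moreover have "sublist [1, 0, 1] v \<Longrightarrow> sublist [1, 0, 1] (v @ z)"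
    by (meson sublist_append_rightI sublist_order.order.trans)
  ultimately show ?thesis using assms by (auto simp: admissible_def)
qed

lemma admissible_snoc_zero_cases:
  assumes "admissible (v @ [0])"
  obtains (two_zeros) u where "v = u @ [0]" "admissible u" "u = [] \<or> last u = 1"
    | (more_zeros) "v \<noteq> []" "last v = 0" "admissible v"
proof -
  have "v \<noteq> []" "last v \<noteq> 1"
    using assms by (auto simp: admissible_def suffix_pair_snoc_iff simp del: suffix_snoc)
  moreover from this have "last v = 0"
    using last_binary[of v] admissible_appendD[OF assms] by auto
  ultimately obtain u where u: "v = u @ [0]" by (cases v rule: rev_cases) auto
  have u_props: "set u \<subseteq> {0, 1} \<and> \<not> prefix [0, 1] u \<and> \<not> sublist [1, 0, 1] u"
    using admissible_appendD[of u "[0, 0]"] assms u by simp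
  show thesis
  proof (cases "u = [] \<or> last u = 1")
    case True
    then have "admissible u"
      using u_props by (auto simp: admissible_def dest: last_of_suffix_pair)
    with u True show thesis by (intro two_zeros)
  next
    case False
    then have "admissible v"
      using admissible_appendD[of v "[0]"] assms u
      by (auto simp: admissible_def suffix_pair_snoc_iff simp del: suffix_snoc)
    with \<open>v \<noteq> []\<close> \<open>last v = 0\<close> show thesis by (rule more_zeros)
  qed
qed

inductive block_word :: "nat list \<Rightarrow> bool" where
  block_word_Nil: "block_word []"
| block_word_snoc_one: "block_word w \<Longrightarrow> block_word (w @ [1])"
| block_word_append_zeros: "block_word w \<Longrightarrow> 2 \<le> k \<Longrightarrow> block_word (w @ replicate k 0)"

lemma block_word_snoc_zero: "block_word v \<Longrightarrow> v \<noteq> [] \<Longrightarrow> last v = 0 \<Longrightarrow> block_word (v @ [0])"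
proof (induction rule: block_word.cases)
  case (block_word_append_zeros w k)
  have "w @ replicate k 0 @ [0] = w @ replicate (Suc k) 0"
    by (simp add: replicate_append_same)
  then show ?case
    using block_word.block_word_append_zeros[of w "Suc k"] block_word_append_zeros by simp
qed auto

lemma block_word_imp_admissible: "block_word w \<Longrightarrow> admissible w"
proof (induction rule: block_word.induct)
  case block_word_Nil
  then show ?case by (simp add: admissible_def)
next
  case (block_word_snoc_one w)
  then show ?case using admissible_snoc_one_iff by blast
next
  case (block_word_append_zeros w k)
  then obtain j where k: "k = Suc (Suc j)" using le_Suc_ex[of 2 k] by auto
  show ?case
  proof (cases "w = [] \<or> last w = 1")
    case True
    with block_word_append_zeros.IH have "admissible (w @ [0, 0])"
      by (rule admissible_append_two_zeros)
    from admissible_append_zeros[OF this, of j] show ?thesis using k by simp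
  next
    case False
    then have "last w = 0"
      using block_word_append_zeros.IH last_binary[of w] by (auto simp: admissible_def)
    with False show ?thesis
      using admissible_append_zeros[OF block_word_append_zeros.IH] by auto
  qed
qed

lemma admissible_imp_block_word: "admissible w \<Longrightarrow> block_word w"
proof (induction "length w" arbitrary: w rule: less_induct)
  case less
  show ?case
  proof (cases w rule: rev_cases)
    case Nil
    then show ?thesis by (simp add: block_word_Nil)
  next
    case (snoc v x)
    have "x = 0 \<or> x = 1" using less.prems snoc by (auto simp: admissible_def)
    then show ?thesis
    proof
      assume "x = 1"
      with less.prems snoc have "admissible v" using admissible_snoc_one_iff by blast
      with less.hyps snoc \<open>x = 1\<close> show ?thesis using block_word_snoc_one by simp
    next
      assume x: "x = 0"
      from less.prems snoc x have "admissible (v @ [0])" by simp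
      then show ?thesis
      proof (cases rule: admissible_snoc_zero_cases)
        case (two_zeros u)
        then have "block_word u" using less.hyps snoc by simp
        from block_word_append_zeros[OF this, of 2] show ?thesis
          using two_zeros snoc x by (simp add: numeral_2_eq_2)
      next
        case more_zeros
        then have "block_word v" using less.hyps snoc by simp
        from block_word_snoc_zero[OF this more_zeros(1,2)] show ?thesis using snoc x by simp
      qed
    qed
  qed
qed

section \<open>Counting admissible words\<close>

definition adm_words :: "nat \<Rightarrow> nat list set" where
  "adm_words m = {w. length w = m \<and> admissible w}"

definition adm_words_end1 :: "nat \<Rightarrow> nat list set" where
  "adm_words_end1 m = {w \<in> adm_words m. w = [] \<or> last w = 1}"

definition adm_words_end0 :: "nat \<Rightarrow> nat list set" where
  "adm_words_end0 m = {w \<in> adm_words m. w \<noteq> [] \<and> last w = 0}"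

lemma finite_adm_words: "finite (adm_words m)"
proof (rule finite_subset)
  show "adm_words m \<subseteq> {w. set w \<subseteq> {0, 1} \<and> length w = m}"
    by (auto simp: adm_words_def admissible_def)
  show "finite {w. set w \<subseteq> {0::nat, 1} \<and> length w = m}"
    by (rule finite_lists_length_eq) simp
qed

lemma card_adm_words_split: "card (adm_words m) = card (adm_words_end1 m) + card (adm_words_end0 m)"
proof -
  have "adm_words m = adm_words_end1 m \<union> adm_words_end0 m"
    using last_binary
    by (auto simp: adm_words_end1_def adm_words_end0_def adm_words_def admissible_def)
  moreover have "adm_words_end1 m \<inter> adm_words_end0 m = {}"
    by (auto simp: adm_words_end1_def adm_words_end0_def)
  ultimately show ?thesis
    using finite_adm_words[of m]
    by (metis card_Un_disjoint finite_Un)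
qed

lemma adm_words_end1_Suc: "adm_words_end1 (Suc m) = (\<lambda>v. v @ [1]) ` adm_words m"
proof (intro subset_antisym subsetI)
  fix w assume w: "w \<in> adm_words_end1 (Suc m)"
  then obtain v where v: "w = v @ [1]"
    by (cases w rule: rev_cases) (auto simp: adm_words_end1_def adm_words_def)
  with w have "v \<in> adm_words m"
    using admissible_snoc_one_iff by (auto simp: adm_words_end1_def adm_words_def)
  with v show "w \<in> (\<lambda>v. v @ [1]) ` adm_words m" by blast
next
  fix w assume "w \<in> (\<lambda>v. v @ [1]) ` adm_words m"
  then show "w \<in> adm_words_end1 (Suc m)"
    using admissible_snoc_one_iff by (auto simp: adm_words_end1_def adm_words_def)
qed

lemma adm_words_end0_Suc_Suc:
  "adm_words_end0 (Suc (Suc m))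
     = (\<lambda>v. v @ [0]) ` adm_words_end0 (Suc m) \<union> (\<lambda>u. u @ [0, 0]) ` adm_words_end1 m"
proof (intro subset_antisym subsetI)
  fix w assume w: "w \<in> adm_words_end0 (Suc (Suc m))"
  then obtain v where v: "w = v @ [0]"
    by (cases w rule: rev_cases) (auto simp: adm_words_end0_def adm_words_def)
  with w have "admissible (v @ [0])" "length v = Suc m"
    by (auto simp: adm_words_end0_def adm_words_def)
  then show "w \<in> (\<lambda>v. v @ [0]) ` adm_words_end0 (Suc m)
                   \<union> (\<lambda>u. u @ [0, 0]) ` adm_words_end1 m"
  proof (cases rule: admissible_snoc_zero_cases)
    case (two_zeros u)
    with \<open>length v = Suc m\<close> have "u \<in> adm_words_end1 m"
      by (auto simp: adm_words_end1_def adm_words_def)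
    with v two_zeros show ?thesis by auto
  next
    case more_zeros
    with \<open>length v = Suc m\<close> have "v \<in> adm_words_end0 (Suc m)"
      by (auto simp: adm_words_end0_def adm_words_def)
    with v show ?thesis by blast
  qed
next
  fix w
  assume "w \<in> (\<lambda>v. v @ [0]) ` adm_words_end0 (Suc m) \<union> (\<lambda>u. u @ [0, 0]) ` adm_words_end1 m"
  then show "w \<in> adm_words_end0 (Suc (Suc m))"
    using admissible_snoc_zero admissible_append_two_zeros
    by (auto simp: adm_words_end1_def adm_words_end0_def adm_words_def)
qed

lemma card_adm_words_end1_Suc: "card (adm_words_end1 (Suc m)) = card (adm_words m)"
  unfolding adm_words_end1_Suc by (rule card_image) (simp add: inj_on_def)

lemma card_adm_words_end0_Suc_Suc:
  "card (adm_words_end0 (Suc (Suc m))) = card (adm_words_end0 (Suc m)) + card (adm_words_end1 m)"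
proof -
  have "(\<lambda>v. v @ [0]) ` adm_words_end0 (Suc m) \<inter> (\<lambda>u. u @ [0, 0]) ` adm_words_end1 m = {}"
    by (auto simp: adm_words_end0_def adm_words_end1_def adm_words_def admissible_def
        suffix_pair_snoc_iff simp del: suffix_snoc)
  moreover have "finite (adm_words_end0 k)" "finite (adm_words_end1 k)" for k
    using finite_adm_words[of k] by (auto simp: adm_words_end0_def adm_words_end1_def)
  ultimately show ?thesis
    unfolding adm_words_end0_Suc_Suc by (simp add: card_Un_disjoint card_image inj_on_def)
qed

lemma card_adm_words_rec:
  "card (adm_words (m + 4))
     = card (adm_words (m + 3)) + card (adm_words (m + 2)) + card (adm_words m)"
  using card_adm_words_split[of "m + 4"] card_adm_words_split[of "m + 2"]
    card_adm_words_end1_Suc[of "m + 3"] card_adm_words_end1_Suc[of m]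
    card_adm_words_end0_Suc_Suc[of "m + 2"] card_adm_words_end0_Suc_Suc[of "m + 1"]
  by (simp add: eval_nat_numeral)

lemma card_adm_words_initial:
  "card (adm_words 0) = 1" "card (adm_words 1) = 1"
  "card (adm_words 2) = 2" "card (adm_words 3) = 4"
proof -
  have end1_0: "adm_words_end1 0 = {[]}"
    by (auto simp: adm_words_end1_def adm_words_def admissible_def)
  have end0_0: "adm_words_end0 0 = {}" and end0_1: "adm_words_end0 (Suc 0) = {}"
    by (auto simp: adm_words_end0_def adm_words_def admissible_def length_Suc_conv)
  show "card (adm_words 0) = 1" "card (adm_words 1) = 1"
    "card (adm_words 2) = 2" "card (adm_words 3) = 4"
    using card_adm_words_split[of 0] card_adm_words_split[of 1] card_adm_words_split[of 2]
      card_adm_words_split[of 3] card_adm_words_end1_Suc[of 0] card_adm_words_end1_Suc[of 1]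
      card_adm_words_end1_Suc[of 2] card_adm_words_end0_Suc_Suc[of 0]
      card_adm_words_end0_Suc_Suc[of 1]
    by (simp_all add: end1_0 end0_0 end0_1 eval_nat_numeral)
qed

section \<open>The word of a bracketing\<close>

lemma leaves_pos: "0 < leaves t"
  by (induction t) auto

text \<open>Letter \<open>i\<close> (counted from 0) belongs to the \<open>(i + 2)\<close>-nd variable; the first variable
  gets no letter.\<close>

fun bracket_word :: "btree \<Rightarrow> nat list" where
  "bracket_word Leaf = []"
| "bracket_word (Node l r) = bracket_word l @ (if r = Leaf then [1] else replicate (leaves r) 0)"

lemma length_bracket_word: "length (bracket_word t) = leaves t - 1"
  using leaves_pos by (induction t) (auto simp: Suc_leI)

lemma block_word_bracket_word: "block_word (bracket_word t)"
proof (induction t)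
  case Leaf
  then show ?case by (simp add: block_word_Nil)
next
  case (Node l r)
  show ?case
  proof (cases r)
    case Leaf
    then show ?thesis using block_word_snoc_one[OF Node.IH(1)] by simp
  next
    case (Node a b)
    then have "2 \<le> leaves r" using leaves_pos[of a] leaves_pos[of b] by simp
    then show ?thesis using block_word_append_zeros[OF Node.IH(1)] Node by simp
  qed
qed

fun left_comb :: "nat \<Rightarrow> btree" where
  "left_comb 0 = Leaf"
| "left_comb (Suc k) = Node (left_comb k) Leaf"

lemma leaves_left_comb: "leaves (left_comb k) = Suc k"
  by (induction k) auto

lemma block_word_imp_bracket_word:
  "block_word w \<Longrightarrow> \<exists>t. bracket_word t = w \<and> leaves t = Suc (length w)"
proof (induction rule: block_word.induct)
  case block_word_Nil
  show ?case by (intro exI[of _ Leaf]) simp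
next
  case (block_word_snoc_one w)
  then obtain t where "bracket_word t = w \<and> leaves t = Suc (length w)" by blast
  then show ?case by (intro exI[of _ "Node t Leaf"]) simp
next
  case (block_word_append_zeros w k)
  then obtain t where "bracket_word t = w \<and> leaves t = Suc (length w)" by blast
  moreover obtain j where "k = Suc (Suc j)"
    using block_word_append_zeros(2) le_Suc_ex[of 2 k] by auto
  ultimately show ?case
    by (intro exI[of _ "Node t (left_comb (Suc j))"]) (simp add: leaves_left_comb)
qed

lemma bracket_word_image: "1 \<le> n \<Longrightarrow> bracket_word ` B n = adm_words (n - 1)"
proof (intro subset_antisym subsetI)
  fix w assume "w \<in> bracket_word ` B n"
  then show "w \<in> adm_words (n - 1)"
    using block_word_bracket_word block_word_imp_admissible length_bracket_word
    by (auto simp: B_def adm_words_def)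
next
  fix w assume "1 \<le> n" "w \<in> adm_words (n - 1)"
  then obtain t where "bracket_word t = w" "leaves t = n"
    using block_word_imp_bracket_word admissible_imp_block_word by (fastforce simp: adm_words_def)
  then show "w \<in> bracket_word ` B n" by (auto simp: B_def)
qed

section \<open>Term operations of the graph algebra\<close>

lemma graph_op_cases: "graph_op E a b = None \<or> graph_op E a b = a"
  by (cases a; cases b) auto

lemma eval_graph_op_cases:
  "eval_term (graph_op E) t xs = None \<or> eval_term (graph_op E) t xs = hd xs"
proof (induction t arbitrary: xs)
  case (Node l r)
  then show ?case
    using graph_op_cases[of E "eval_term (graph_op E) l (take (leaves l) xs)"] leaves_pos[of l]
    by (metis eval_term.simps(2) hd_take)
qed simp

lemma eval_graph_op_sink:
  assumes "\<forall>y. (v, y) \<notin> E" "hd xs = Some v" "t \<noteq> Leaf"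
  shows "eval_term (graph_op E) t xs = None"
proof -
  obtain l r where t: "t = Node l r" using assms(3) by (cases t) auto
  have "eval_term (graph_op E) l (take (leaves l) xs) \<in> {None, Some v}"
    using eval_graph_op_cases[of E l "take (leaves l) xs"] leaves_pos[of l] assms(2) by auto
  then show ?thesis using assms(1) t by (cases "eval_term (graph_op E) r (drop (leaves l) xs)") auto
qed

lemma eval_graph_op_loop:
  assumes loop: "\<forall>y. (w, y) \<in> E \<longleftrightarrow> y = w"
    and "length xs = leaves t" "hd xs = Some w"
  shows "eval_term (graph_op E) t xs = (if \<forall>y\<in>set xs. y = Some w then Some w else None)"
  using assms(2,3)
proof (induction t arbitrary: xs)
  case Leaf
  then show ?case by (cases xs) auto
next
  case (Node l r)
  let ?xs1 = "take (leaves l) xs" and ?xs2 = "drop (leaves l) xs"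
  have lengths: "length ?xs1 = leaves l" "length ?xs2 = leaves r"
    using Node.prems(1) by auto
  have "?xs2 \<noteq> []" using lengths(2) leaves_pos[of r] by auto
  then have "hd ?xs2 \<in> set ?xs2" by simp
  have "graph_op E (Some w) (eval_term (graph_op E) r ?xs2)
      = (if \<forall>y\<in>set ?xs2. y = Some w then Some w else None)"
  proof (cases "hd ?xs2 = Some w")
    case True
    then show ?thesis using Node.IH(2)[OF lengths(2)] loop by simp
  next
    case False
    then have "eval_term (graph_op E) r ?xs2 \<noteq> Some w"
      using eval_graph_op_cases[of E r ?xs2] by auto
    then have "graph_op E (Some w) (eval_term (graph_op E) r ?xs2) = None"
      using loop by (cases "eval_term (graph_op E) r ?xs2") auto
    moreover have "\<not> (\<forall>y\<in>set ?xs2. y = Some w)"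
      using False \<open>hd ?xs2 \<in> set ?xs2\<close> by blast
    ultimately show ?thesis by simp
  qed
  moreover have "set xs = set ?xs1 \<union> set ?xs2"
    by (metis append_take_drop_id set_append)
  ultimately show ?case
    using Node.IH(1)[OF lengths(1)] Node.prems(2) leaves_pos[of l] by auto
qed

lemma G_edges_from_U: "(U, y) \<in> G_edges \<longleftrightarrow> y \<noteq> U"
  by (cases y) (auto simp: G_edges_def)

lemma G_edges_from_Vv: "(Vv, y) \<notin> G_edges"
  by (auto simp: G_edges_def)

lemma G_edges_from_W: "(W, y) \<in> G_edges \<longleftrightarrow> y = W"
  by (auto simp: G_edges_def)

lemma eval_G_in_Vv_W_iff:
  assumes "t \<noteq> Leaf" "length xs = leaves t"
  shows "eval_term (graph_op G_edges) t xs \<in> {Some Vv, Some W} \<longleftrightarrow> (\<forall>y\<in>set xs. y = Some W)"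
proof -
  have "hd xs \<in> set xs" using assms(2) leaves_pos[of t] by (cases xs) auto
  show ?thesis
  proof (cases "hd xs = Some W")
    case True
    then show ?thesis using eval_graph_op_loop[OF _ assms(2) True] G_edges_from_W by simp
  next
    case False
    have "eval_term (graph_op G_edges) t xs \<noteq> Some Vv"
      using eval_graph_op_sink[OF _ _ assms(1)] eval_graph_op_cases[of G_edges t xs] G_edges_from_Vv
      by (metis option.distinct(1))
    then show ?thesis
      using False \<open>hd xs \<in> set xs\<close> eval_graph_op_cases[of G_edges t xs] by auto
  qed
qed

definition accepts :: "nat \<Rightarrow> vert option \<Rightarrow> bool" where
  "accepts b y \<longleftrightarrow> y = Some W \<or> b = 1 \<and> y = Some Vv"

lemma list_all2_accepts_zeros:
  "length ys = m \<Longrightarrow> list_all2 accepts (replicate m 0) ys \<longleftrightarrow> (\<forall>y\<in>set ys. y = Some W)"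
  by (induction ys arbitrary: m) (auto simp: accepts_def)

lemma eval_G_U:
  assumes "length xs = leaves t" "hd xs = Some U"
  shows "eval_term (graph_op G_edges) t xs
           = (if list_all2 accepts (bracket_word t) (tl xs) then Some U else None)"
  using assms
proof (induction t arbitrary: xs)
  case Leaf
  then show ?case by (cases xs) auto
next
  case (Node l r)
  let ?xs1 = "take (leaves l) xs" and ?xs2 = "drop (leaves l) xs"
  let ?block = "if r = Leaf then [1] else replicate (leaves r) (0::nat)"
  have lengths: "length ?xs1 = leaves l" "length ?xs2 = leaves r"
    using Node.prems(1) by auto
  have "?xs1 \<noteq> []" using lengths(1) leaves_pos[of l] by auto
  have right: "eval_term (graph_op G_edges) r ?xs2 \<in> {Some Vv, Some W}
      \<longleftrightarrow> list_all2 accepts ?block ?xs2"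
  proof (cases "r = Leaf")
    case True
    then obtain y where "?xs2 = [y]" using lengths(2) by (cases ?xs2) auto
    with True show ?thesis by (auto simp: accepts_def)
  next
    case False
    then show ?thesis
      using eval_G_in_Vv_W_iff[OF False lengths(2)] list_all2_accepts_zeros[OF lengths(2)] by simp
  qed
  have "tl xs = tl ?xs1 @ ?xs2"
    using \<open>?xs1 \<noteq> []\<close> by (metis append_take_drop_id tl_append_if)
  then have "list_all2 accepts (bracket_word (Node l r)) (tl xs)
      \<longleftrightarrow> list_all2 accepts (bracket_word l) (tl ?xs1) \<and> list_all2 accepts ?block ?xs2"
    using length_bracket_word[of l] lengths(1) by (simp add: list_all2_append)
  moreover have "graph_op G_edges (Some U) z = (if z \<in> {Some Vv, Some W} then Some U else None)"
    for z
    using G_edges_from_U by (cases z; cases "the z") auto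
  ultimately show ?case
    using Node.IH(1)[OF lengths(1)] Node.prems(2) leaves_pos[of l] right by auto
qed

definition word_op :: "nat list \<Rightarrow> vert option list \<Rightarrow> vert option" where
  "word_op w xs = (if hd xs = Some U \<and> list_all2 accepts w (tl xs) then Some U
                   else if \<forall>y\<in>set xs. y = Some W then Some W else None)"

lemma eval_G_eq_word_op:
  assumes "t \<noteq> Leaf" "length xs = leaves t"
  shows "eval_term (graph_op G_edges) t xs = word_op (bracket_word t) xs"
proof -
  have "hd xs \<in> set xs" using assms(2) leaves_pos[of t] by (cases xs) auto
  consider "hd xs = None" | "hd xs = Some U" | "hd xs = Some Vv" | "hd xs = Some W"
    by (metis option.exhaust vert.exhaust)
  then show ?thesis
  proof cases
    case 1
    then show ?thesis
      using eval_graph_op_cases[of G_edges t xs] \<open>hd xs \<in> set xs\<close> by (auto simp: word_op_def)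
  next
    case 2
    then show ?thesis using eval_G_U[OF assms(2)] \<open>hd xs \<in> set xs\<close> by (auto simp: word_op_def)
  next
    case 3
    then show ?thesis
      using eval_graph_op_sink[of Vv G_edges xs t] assms(1) G_edges_from_Vv \<open>hd xs \<in> set xs\<close>
      by (auto simp: word_op_def)
  next
    case 4
    then show ?thesis
      using eval_graph_op_loop[OF _ assms(2)] G_edges_from_W by (auto simp: word_op_def)
  qed
qed

lemma term_op_G_eq_word_op:
  assumes "2 \<le> n" "t \<in> B n"
  shows "term_op (graph_carrier UNIV) (graph_op G_edges) n t
           = restrict (word_op (bracket_word t)) {xs. length xs = n}"
proof -
  have "graph_carrier (UNIV :: vert set) = UNIV"
    unfolding graph_carrier_def by (auto intro: option.exhaust)
  moreover have "t \<noteq> Leaf" using assms by (auto simp: B_def)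
  ultimately show ?thesis
    using assms(2) unfolding term_op_def
    by (simp add: B_def eval_G_eq_word_op cong: restrict_cong)
qed

lemma list_all2_accepts_single_Vv:
  assumes "length w = m" "i < m"
  shows "list_all2 accepts w ((replicate m (Some W))[i := Some Vv]) \<longleftrightarrow> w ! i = 1"
proof -
  have "list_all2 accepts w ((replicate m (Some W))[i := Some Vv])
      \<longleftrightarrow> (\<forall>j<m. accepts (w ! j) (if j = i then Some Vv else Some W))"
    using assms by (auto simp: list_all2_conv_all_nth nth_list_update)
  also have "\<dots> \<longleftrightarrow> w ! i = 1"
    using assms(2) by (auto simp: accepts_def)
  finally show ?thesis .
qed

lemma word_op_inj:
  assumes "length w1 = m" "length w2 = m" "set w1 \<subseteq> {0, 1}" "set w2 \<subseteq> {0, 1}"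
    and "restrict (word_op w1) {xs. length xs = Suc m}
           = restrict (word_op w2) {xs. length xs = Suc m}"
  shows "w1 = w2"
proof (rule ccontr)
  assume "w1 \<noteq> w2"
  then obtain i where i: "i < m" "w1 ! i \<noteq> w2 ! i"
    using assms(1,2) nth_equalityI by metis
  have "w1 ! i \<in> set w1" "w2 ! i \<in> set w2"
    using assms(1,2) i(1) by simp_all
  with assms(3,4) have "w1 ! i \<in> {0, 1}" "w2 ! i \<in> {0, 1}"
    by blast+
  then have "w1 ! i = 1 \<longleftrightarrow> w2 ! i \<noteq> 1" using i(2) by auto
  define xs where "xs = Some U # (replicate m (Some W))[i := Some Vv]"
  have word_op_xs: "word_op w xs = (if w ! i = 1 then Some U else None)" if "length w = m" for w
    using list_all2_accepts_single_Vv[OF that i(1)] by (simp add: word_op_def xs_def)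
  have "word_op w1 xs = word_op w2 xs"
    using fun_cong[OF assms(5), of xs] by (simp add: xs_def)
  then show False
    using \<open>w1 ! i = 1 \<longleftrightarrow> w2 ! i \<noteq> 1\<close> word_op_xs assms(1,2) by auto
qed

lemma assoc_spectrum_G:
  assumes "2 \<le> n"
  shows "assoc_spectrum (graph_carrier UNIV) (graph_op G_edges) n = card (adm_words (n - 1))"
proof -
  obtain m where n: "n = Suc m" using assms by (cases n) auto
  let ?op = "\<lambda>w. restrict (word_op w) {xs. length xs = n}"
  have "term_op (graph_carrier UNIV) (graph_op G_edges) n ` B n = ?op ` bracket_word ` B n"
    unfolding image_image using term_op_G_eq_word_op[OF assms] by (rule image_cong[OF refl])
  also have "\<dots> = ?op ` adm_words m"
    using bracket_word_image[of n] n by simp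
  finally have "assoc_spectrum (graph_carrier UNIV) (graph_op G_edges) n = card (?op ` adm_words m)"
    by (simp add: assoc_spectrum_def)
  also have "\<dots> = card (adm_words m)"
  proof (rule card_image, rule inj_onI)
    fix w1 w2 assume "w1 \<in> adm_words m" "w2 \<in> adm_words m" "?op w1 = ?op w2"
    then show "w1 = w2"
      using n by (intro word_op_inj[of w1 m w2]) (auto simp: adm_words_def admissible_def)
  qed
  finally show ?thesis using n by simp
qed

section \<open>Growth of the spectrum\<close>

lemma power_bounds_of_recurrence:
  fixes f :: "nat \<Rightarrow> real" and a c1 c2 :: real
  assumes rec: "\<And>m. f (m + 4) = f (m + 3) + f (m + 2) + f m"
    and root: "a ^ 4 = a ^ 3 + a ^ 2 + 1"
    and initial: "\<And>m. m < 4 \<Longrightarrow> c1 * a ^ m \<le> f m \<and> f m \<le> c2 * a ^ m"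
  shows "c1 * a ^ m \<le> f m \<and> f m \<le> c2 * a ^ m"
proof (induction m rule: less_induct)
  case (less m)
  show ?case
  proof (cases "m < 4")
    case True
    then show ?thesis by (rule initial)
  next
    case False
    then obtain k where k: "m = k + 4" by (metis add.commute le_Suc_ex not_less)
    have "a ^ m = a ^ k * a ^ 4" using k by (simp add: power_add)
    also have "\<dots> = a ^ (k + 3) + a ^ (k + 2) + a ^ k"
      by (simp only: root power_add distrib_left mult_1_right)
    finally have scaled: "c * a ^ m = c * a ^ (k + 3) + c * a ^ (k + 2) + c * a ^ k" for c
      by (simp add: algebra_simps)
    have IH: "c1 * a ^ j \<le> f j \<and> f j \<le> c2 * a ^ j" if "j < m" for j
      using less.IH that .
    show ?thesis
      using rec[of k] scaled[of c1] scaled[of c2] IH[of "k + 3"] IH[of "k + 2"] IH[of k] k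
      by simp
  qed
qed

lemma assoc_spectrum_G_bigtheta:
  fixes a :: real
  assumes "1 \<le> a" "a ^ 4 = a ^ 3 + a ^ 2 + 1"
  shows "(\<lambda>n. real (assoc_spectrum (graph_carrier UNIV) (graph_op G_edges) n)) \<in> \<Theta>(\<lambda>n. a ^ n)"
proof -
  have initial: "1 / a ^ 3 * a ^ m \<le> real (card (adm_words m))
      \<and> real (card (adm_words m)) \<le> 4 * a ^ m"
    if "m < 4" for m
  proof -
    have "1 \<le> real (card (adm_words m))" "real (card (adm_words m)) \<le> 4"
      using that card_adm_words_initial by (auto simp: less_Suc_eq numeral_eq_Suc)
    moreover have "1 / a ^ 3 * a ^ m \<le> 1"
      using power_increasing[of m 3 a] that assms(1) by simp
    moreover have "1 \<le> a ^ m"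
      using assms(1) by simp
    ultimately show ?thesis
      by linarith
  qed
  have bounds: "1 / a ^ 3 * a ^ m \<le> real (card (adm_words m))
      \<and> real (card (adm_words m)) \<le> 4 * a ^ m"
    for m
  proof (rule power_bounds_of_recurrence)
    show "real (card (adm_words (k + 4)))
        = real (card (adm_words (k + 3))) + real (card (adm_words (k + 2)))
          + real (card (adm_words k))" for k
      using card_adm_words_rec[of k] by simp
  qed (use assms(2) initial in auto)
  have "1 / a ^ 4 * a ^ n \<le> real (assoc_spectrum (graph_carrier UNIV) (graph_op G_edges) n)
      \<and> real (assoc_spectrum (graph_carrier UNIV) (graph_op G_edges) n) \<le> 4 * a ^ n"
    if n_ge_2: "2 \<le> n" for n
  proof -
    obtain m where n: "n = Suc m" using n_ge_2 by (cases n) auto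
    have "1 / a ^ 4 * a ^ n = 1 / a ^ 3 * a ^ m"
      using n assms(1) by (simp add: power_Suc power_Suc2 numeral_eq_Suc)
    moreover have "a ^ m \<le> a ^ n"
      using n assms(1) by (intro power_increasing) auto
    ultimately show ?thesis using bounds[of m] assoc_spectrum_G[OF n_ge_2] n by simp
  qed
  then have "eventually (\<lambda>n. 1 / a ^ 4 * norm (a ^ n)
      \<le> norm (real (assoc_spectrum (graph_carrier UNIV) (graph_op G_edges) n))
      \<and> norm (real (assoc_spectrum (graph_carrier UNIV) (graph_op G_edges) n))
        \<le> 4 * norm (a ^ n)) at_top"
    using assms(1) unfolding eventually_at_top_linorder by (intro exI[of _ 2]) simp
  then show ?thesis
    using assms(1) by (intro bigthetaI'[of "1 / a ^ 4" 4]) simp_all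
qed

lemma quartic_root_exists: "\<exists>a::real. 1.75 < a \<and> a < 1.76 \<and> a ^ 4 - a ^ 3 - a ^ 2 - 1 = 0"
proof -
  obtain a :: real where a: "1.75 \<le> a" "a \<le> 1.76" "a ^ 4 - a ^ 3 - a ^ 2 - 1 = 0"
  proof (atomize_elim, rule IVT')
    show "continuous_on {1.75..1.76} (\<lambda>x::real. x ^ 4 - x ^ 3 - x ^ 2 - 1)"
      by (intro continuous_intros)
  qed (simp_all add: eval_nat_numeral)
  moreover have "(1.75::real) ^ 4 - 1.75 ^ 3 - 1.75 ^ 2 - 1 \<noteq> 0"
    and "(1.76::real) ^ 4 - 1.76 ^ 3 - 1.76 ^ 2 - 1 \<noteq> 0"
    by (simp_all add: eval_nat_numeral)
  ultimately show ?thesis by (metis order.not_eq_order_implies_strict)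
qed

text \<open>Both roots are roots of the cubic factor; subtracting the two cubic equations and
  cancelling \<open>a - b\<close> leaves a quantity that is positive for \<open>a \<ge> 7/4\<close> and \<open>b > 0\<close>.\<close>

lemma quartic_root_unique:
  fixes a b :: real
  assumes a: "7/4 \<le> a" "a ^ 4 - a ^ 3 - a ^ 2 - 1 = 0"
    and b: "0 < b" "b ^ 4 - b ^ 3 - b ^ 2 - 1 = 0"
  shows "b = a"
proof (rule ccontr)
  assume "b \<noteq> a"
  have factor: "x ^ 4 - x ^ 3 - x ^ 2 - 1 = (x + 1) * (x ^ 3 - 2 * x ^ 2 + x - 1)" for x :: real
    by algebra
  have "a ^ 3 - 2 * a ^ 2 + a - 1 = 0" "b ^ 3 - 2 * b ^ 2 + b - 1 = 0"
    using a b factor[of a] factor[of b] by simp_all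
  moreover have "(a ^ 3 - 2 * a ^ 2 + a - 1) - (b ^ 3 - 2 * b ^ 2 + b - 1)
      = (a - b) * ((a - 1) ^ 2 + (b - 1) ^ 2 + a * b - 1)"
    by algebra
  ultimately have "(a - 1) ^ 2 + (b - 1) ^ 2 + a * b - 1 = 0"
    using \<open>b \<noteq> a\<close> by simp
  moreover have "9/16 \<le> (a - 1) ^ 2"
    using power_mono[of "3/4" "a - 1" 2] a(1) by (simp add: power2_eq_square)
  moreover have "7/4 * b \<le> a * b"
    using a(1) b(1) by (intro mult_right_mono) auto
  moreover have "(b - 1) ^ 2 = (b - 1/8) ^ 2 - 7/4 * b + 63/64"
    by algebra
  moreover have "0 \<le> (b - 1/8) ^ 2"
    by simp
  ultimately show False
    by linarith
qed

theorem proposition8p3: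
  shows "(\<forall>n\<ge>3. assoc_spectrum (graph_carrier (UNIV :: vert set)) (graph_op G_edges) n
                  = card (R (n - 1)))
    \<and> (\<exists>\<alpha>::real. \<alpha> > 0 \<and> \<alpha>^4 - \<alpha>^3 - \<alpha>^2 - 1 = 0
            \<and> (\<forall>\<beta>::real. \<beta> > 0 \<and> \<beta>^4 - \<beta>^3 - \<beta>^2 - 1 = 0 \<longrightarrow> \<beta> = \<alpha>)
            \<and> 1.75 < \<alpha> \<and> \<alpha> < 1.76
            \<and> (\<lambda>n. real (assoc_spectrum (graph_carrier (UNIV :: vert set)) (graph_op G_edges) n))
                 \<in> \<Theta>(\<lambda>n. \<alpha> ^ n))"
proof -
  obtain \<alpha> :: real where \<alpha>: "1.75 < \<alpha>" "\<alpha> < 1.76" "\<alpha>^4 - \<alpha>^3 - \<alpha>^2 - 1 = 0"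
    using quartic_root_exists by blast
  have "\<forall>n\<ge>3. assoc_spectrum (graph_carrier (UNIV :: vert set)) (graph_op G_edges) n
      = card (R (n - 1))"
    using assoc_spectrum_G R_eq_admissible by (simp add: adm_words_def)
  moreover have "\<forall>\<beta>::real. \<beta> > 0 \<and> \<beta>^4 - \<beta>^3 - \<beta>^2 - 1 = 0 \<longrightarrow> \<beta> = \<alpha>"
    using quartic_root_unique[of \<alpha>] \<alpha> by auto
  moreover have "(\<lambda>n. real (assoc_spectrum (graph_carrier (UNIV :: vert set)) (graph_op G_edges) n))
      \<in> \<Theta>(\<lambda>n. \<alpha> ^ n)"
    using \<alpha> by (intro assoc_spectrum_G_bigtheta) auto
  ultimately show ?thesis
    using \<alpha> by (intro conjI exI[of _ \<alpha>]) auto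
qed

end
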